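(* Let $x,\theta^\star,\check\theta\in\mathbb R^d$ with $\|x\|\le1$, let $\underline V\in\mathbb R^{d\times d}$ be symmetric positive definite with $\underline V\succ\alpha m I_d$ for some $\alpha>0$ and integer $m\ge1$, let $\beta>0$, and let $\eta$ be a mean-zero random vector in $\mathbb R^d$ with $0<\mathbb E\|\eta\|^2<\infty$. Set $\tilde\theta=\check\theta+\beta\underline V^{-1/2}\eta$ and $$\pi=\max[\pi_{\min},\min\{\pi_{\max},\Pr(x^\top\tilde\theta<0)\}],$$ with $0<\pi_{\min}<\pi_{\max}<1$. Let $\pi^\star=\pi_{\min}$ if $x^\top\theta^\star>0$, $\pi^\star=\pi_{\max}$ if $x^\top\theta^\star<0$, and $\pi^\star\in[\pi_{\min},\pi_{\max}]$ arbitrary if $x^\top\theta^\star=0$. Then $(\pi-\pi^\star)x^\top\theta^\star\ge0$ and $$(\pi-\pi^\star)x^\top\theta^\star<\sqrt{\frac{\|\check\theta-\theta^\star\|^2_{\underline V}+\beta^2\mathbb E\|\eta\|^2}{\min(\pi_{\min},1-\pi_{\max})\,\alpha m}}.$$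
   Context: In the paper this is applied conditionally on all information up to and including the context at decision point $(i,t)$, with $x=x_{i,t}$, $\theta^\star=\theta^\star_{i,t}$, $\check\theta=\check\theta_{i,t}$, $\underline V=\underline V_{i,t}$, $m=\min(i,t)$, $\beta=\beta_{i,t}$, and $\pi,\pi^\star$ the algorithm's and the optimal policy's probabilities of the control action. $\|y\|_A=\sqrt{y^\top Ay}$; $\Pr$ is over $\eta$ only. *)

theory Defs
  imports "HOL-Analysis.Analysis" "HOL-Probability.Probability"
begin

definition sym_mat :: "real^'n^'n \<Rightarrow> bool" where
  "sym_mat A \<longleftrightarrow> transpose A = A"

definition pos_def_mat :: "real^'n^'n \<Rightarrow> bool" where
  "pos_def_mat A \<longleftrightarrow> sym_mat A \<and> (\<forall>y. y \<noteq> 0 \<longrightarrow> y \<bullet> (A *v y) > 0)"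

definition loewner_gt :: "real^'n^'n \<Rightarrow> real^'n^'n \<Rightarrow> bool" where
  "loewner_gt A B \<longleftrightarrow> pos_def_mat (A - B)"

definition inv_sqrt_mat :: "real^'n^'n \<Rightarrow> real^'n^'n" where
  "inv_sqrt_mat V = (THE S. pos_def_mat S \<and> S ** S = matrix_inv V)"

definition wnorm_sq :: "real^'n^'n \<Rightarrow> real^'n \<Rightarrow> real" where
  "wnorm_sq A y = y \<bullet> (A *v y)"

end

theory Submission
  imports Defs
begin

text \<open>
  Put \<open>v = V\<^sup>-\<^sup>1\<^sup>/\<^sup>2 x\<close> and \<open>Z = x\<^sup>T(\<theta>check - \<theta>star) + \<beta> v\<^sup>T\<eta>\<close>, so that the algorithm plays the
  control action exactly on the event \<open>x\<^sup>T\<theta>star + Z < 0\<close>. Since \<open>V \<succ> \<alpha>m I\<close>, the vector \<open>v\<close>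
  satisfies \<open>|v|\<^sup>2 = x\<^sup>TV\<^sup>-\<^sup>1x \<le> 1/(\<alpha>m)\<close>; together with Cauchy-Schwarz for the inner product
  defined by \<open>V\<close> and \<open>E \<eta> = 0\<close> this gives
  \<open>E Z\<^sup>2 \<le> (|\<theta>check - \<theta>star|\<^sub>V\<^sup>2 + \<beta>\<^sup>2 E|\<eta>|\<^sup>2)/(\<alpha>m)\<close>.
  If \<open>c = x\<^sup>T\<theta>star > 0\<close>, the gap \<open>(\<pi> - \<pi>star) c\<close> is nonzero only when the probability exceeds
  \<open>\<pi>min\<close>; as \<open>Z\<^sup>2 \<ge> c\<^sup>2\<close> on the event, Chebyshev's inequality then gives \<open>\<pi>min c\<^sup>2 < E Z\<^sup>2\<close>,
  while the gap is at most \<open>c\<close>. The case \<open>c < 0\<close> is symmetric with \<open>1 - \<pi>max\<close>.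

  The matrix \<open>V\<^sup>-\<^sup>1\<^sup>/\<^sup>2\<close> is given by a definite description, so its existence and uniqueness
  are proved: existence from an orthonormal eigenbasis of \<open>V\<close> (spectral theorem, via maximisation
  of the Rayleigh quotient), uniqueness since every eigenvalue of the difference of two positive
  definite square roots of the same matrix vanishes.
\<close>

section \<open>Spectral theorem for symmetric matrices\<close>

lemma inner_symmetric_matrix:
  fixes A :: "real^'n^'n"
  assumes "transpose A = A"
  shows "y \<bullet> (A *v z) = (A *v y) \<bullet> z"
  by (metis assms dot_lmul_matrix vector_transpose_matrix)

lemma mat_vector_mult [simp]: "(mat k :: real^'n^'n) *v y = k *\<^sub>R y"
  by (metis linear_scaleR matrix_scaleR matrix_vector_mul(2))

lemma quadratic_nonneg_imp_discriminant_le: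
  fixes p q r :: real
  assumes nonneg: "\<And>t. 0 \<le> q + 2 * p * t + r * t\<^sup>2" and "0 \<le> r"
  shows "p\<^sup>2 \<le> q * r"
proof (cases "r = 0")
  case False
  with \<open>0 \<le> r\<close> have "r > 0" by simp
  with nonneg[of "- p / r"] show ?thesis by (simp add: power2_eq_square field_simps)
next
  case True
  have "p = 0"
  proof (rule ccontr)
    assume "p \<noteq> 0"
    with nonneg[of "- (q + 1) / (2 * p)"] True show False by (simp add: field_simps)
  qed
  with True show ?thesis by simp
qed

lemma symmetric_matrix_unit_eigenvector:
  fixes A :: "real^'n^'n" and W :: "(real^'n) set"
  assumes sym: "transpose A = A" and W: "subspace W" "W \<noteq> {0}"
    and invariant: "\<And>w. w \<in> W \<Longrightarrow> A *v w \<in> W"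
  obtains u l where "u \<in> W" "norm u = 1" "A *v u = l *\<^sub>R u"
proof -
  define K where "K = W \<inter> sphere 0 1"
  have unit_in_K: "y /\<^sub>R norm y \<in> K" if "y \<in> W" "y \<noteq> 0" for y
    using that W(1) unfolding K_def by (auto simp: subspace_scale)
  have "compact K"
    unfolding K_def using W(1) by (simp add: closed_subspace closed_Int_compact)
  moreover have "K \<noteq> {}" using W subspace_0 unit_in_K by blast
  moreover have "continuous_on K (\<lambda>y. y \<bullet> (A *v y))" by (intro continuous_intros)
  ultimately have "\<exists>u\<in>K. \<forall>y\<in>K. y \<bullet> (A *v y) \<le> u \<bullet> (A *v u)"
    by (rule continuous_attains_sup)
  then obtain u where "u \<in> K" and u_max: "\<And>y. y \<in> K \<Longrightarrow> y \<bullet> (A *v y) \<le> u \<bullet> (A *v u)"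
    by blast
  define l where "l = u \<bullet> (A *v u)"
  have u: "u \<in> W" "norm u = 1" "u \<bullet> u = 1"
    using \<open>u \<in> K\<close> unfolding K_def by (auto simp: dot_square_norm)
  have rayleigh: "y \<bullet> (A *v y) \<le> l * (y \<bullet> y)" if "y \<in> W" for y
  proof (cases "y = 0")
    case False
    with u_max[OF unit_in_K[OF that False]]
    have "(y \<bullet> (A *v y)) / (norm y)\<^sup>2 \<le> l"
      by (simp add: l_def matrix_vector_mult_scaleR power2_eq_square divide_inverse mult_ac)
    with False show ?thesis by (simp add: dot_square_norm divide_le_eq)
  qed simp
  \<comment> \<open>First-order optimality of the Rayleigh quotient at \<open>u\<close>: \<open>A u - l u\<close> is orthogonal to \<open>W\<close>.\<close>
  have orthogonal: "(A *v u - l *\<^sub>R u) \<bullet> w = 0" if "w \<in> W" for w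
  proof -
    have "0 \<le> 0 + 2 * (l * (u \<bullet> w) - w \<bullet> (A *v u)) * t + (l * (w \<bullet> w) - w \<bullet> (A *v w)) * t\<^sup>2" for t
    proof -
      have "u + t *\<^sub>R w \<in> W" using W(1) u(1) that by (simp add: subspace_add subspace_scale)
      from rayleigh[OF this] inner_symmetric_matrix[OF sym, of u w] show ?thesis
        by (simp add: matrix_vector_right_distrib matrix_vector_mult_scaleR inner_add_left
            inner_add_right u(3) l_def[symmetric] algebra_simps power2_eq_square inner_commute)
    qed
    moreover have "0 \<le> l * (w \<bullet> w) - w \<bullet> (A *v w)" using rayleigh[OF that] by simp
    ultimately have "(l * (u \<bullet> w) - w \<bullet> (A *v u))\<^sup>2 \<le> 0 * (l * (w \<bullet> w) - w \<bullet> (A *v w))"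
      by (rule quadratic_nonneg_imp_discriminant_le)
    then show ?thesis by (simp add: inner_diff_left inner_commute[of "A *v u" w])
  qed
  have "A *v u - l *\<^sub>R u \<in> W" using invariant u(1) W(1) by (simp add: subspace_diff subspace_scale)
  from orthogonal[OF this] have "A *v u = l *\<^sub>R u" by simp
  with u that show ?thesis by blast
qed

lemma symmetric_matrix_orthonormal_eigenbasis:
  fixes A :: "real^'n^'n"
  assumes sym: "transpose A = A"
    and "subspace W" and "\<And>w. w \<in> W \<Longrightarrow> A *v w \<in> W"
  shows "\<exists>B. B \<subseteq> W \<and> finite B \<and> pairwise orthogonal B \<and> span B = W \<and>
    (\<forall>u\<in>B. norm u = 1 \<and> (\<exists>l. A *v u = l *\<^sub>R u))"
  using assms(2,3)
proof (induction "dim W" arbitrary: W rule: less_induct)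
  case less
  show ?case
  proof (cases "W = {0}")
    case True
    then show ?thesis by (intro exI[of _ "{}"]) auto
  next
    case False
    obtain u l where u: "u \<in> W" "norm u = 1" "A *v u = l *\<^sub>R u"
      using symmetric_matrix_unit_eigenvector[OF sym less.prems(1) False less.prems(2)] .
    have uu: "u \<bullet> u = 1" using u(2) by (simp add: dot_square_norm)
    define W' where "W' = {w \<in> W. u \<bullet> w = 0}"
    have "subspace W'"
      using less.prems(1) unfolding W'_def subspace_def by (auto simp: inner_add_right)
    moreover have "A *v w \<in> W'" if "w \<in> W'" for w
      using that less.prems(2) inner_symmetric_matrix[OF sym, of u w] u(3)
      unfolding W'_def by auto
    moreover have "dim W' < dim W"
    proof (rule dim_psubset)
      have "W' \<subset> W" using u(1) uu unfolding W'_def by force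
      then show "span W' \<subset> span W"
        using \<open>subspace W'\<close> less.prems(1) by (metis span_eq_iff)
    qed
    ultimately obtain B' where B': "B' \<subseteq> W'" "finite B'" "pairwise orthogonal B'" "span B' = W'"
      "\<forall>u\<in>B'. norm u = 1 \<and> (\<exists>l. A *v u = l *\<^sub>R u)"
      using less.hyps by blast
    have "W \<subseteq> span (insert u B')"
    proof
      fix w assume w: "w \<in> W"
      have "w - (u \<bullet> w) *\<^sub>R u \<in> span B'"
        using w u(1) less.prems(1) uu B'(4)
        by (auto simp: W'_def subspace_diff subspace_scale inner_diff_right)
      then have "w - (u \<bullet> w) *\<^sub>R u \<in> span (insert u B')"
        by (meson span_mono subset_insertI subsetD)
      moreover have "(u \<bullet> w) *\<^sub>R u \<in> span (insert u B')"
        by (simp add: span_base span_scale)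
      ultimately have "w - (u \<bullet> w) *\<^sub>R u + (u \<bullet> w) *\<^sub>R u \<in> span (insert u B')"
        by (rule span_add)
      then show "w \<in> span (insert u B')" by simp
    qed
    moreover have "insert u B' \<subseteq> W" using u(1) B'(1) unfolding W'_def by auto
    moreover have "span (insert u B') \<subseteq> W"
      using \<open>insert u B' \<subseteq> W\<close> less.prems(1) by (simp add: span_minimal)
    moreover have "pairwise orthogonal (insert u B')"
      using B'(1,3) unfolding W'_def pairwise_def orthogonal_def by (auto simp: inner_commute)
    ultimately show ?thesis
      using B'(2,5) u by (intro exI[of _ "insert u B'"]) auto
  qed
qed

locale orthonormal_basis =
  fixes B :: "(real^'n) set"
  assumes finite_basis: "finite B" and pairwise_orthogonal_basis: "pairwise orthogonal B"
    and norm_basis: "\<And>u. u \<in> B \<Longrightarrow> norm u = 1" and span_basis: "span B = UNIV"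
begin

lemma inner_basis_sum:
  assumes "v \<in> B"
  shows "v \<bullet> (\<Sum>u\<in>B. c u *\<^sub>R u) = c v"
proof -
  have "v \<bullet> u = (if u = v then 1 else 0)" if "u \<in> B" for u
    using assms that pairwise_orthogonal_basis norm_basis
    unfolding pairwise_def orthogonal_def by (auto simp: dot_square_norm)
  then have "v \<bullet> (\<Sum>u\<in>B. c u *\<^sub>R u) = (\<Sum>u\<in>B. if u = v then c u else 0)"
    unfolding inner_sum_right by (intro sum.cong) auto
  also have "\<dots> = c v" using assms finite_basis by (simp add: sum.delta')
  finally show ?thesis .
qed

lemma basis_expansion: "(\<Sum>u\<in>B. (u \<bullet> y) *\<^sub>R u) = y"
  using orthonormal_basis_expand[OF pairwise_orthogonal_basis norm_basis _ finite_basis, of y]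
  by (simp add: span_basis inner_commute)

lemma basis_coefficient_nonzero: "y \<noteq> 0 \<Longrightarrow> \<exists>u\<in>B. u \<bullet> y \<noteq> 0"
  using basis_expansion[of y] by (metis (no_types, lifting) scale_eq_0_iff sum.neutral)

definition diag_map :: "(real^'n \<Rightarrow> real) \<Rightarrow> real^'n \<Rightarrow> real^'n" where
  "diag_map h y = (\<Sum>u\<in>B. (h u * (u \<bullet> y)) *\<^sub>R u)"

lemma linear_diag_map: "linear (diag_map h)"
  by (rule linearI) (simp_all add: diag_map_def inner_add_right distrib_left scaleR_add_left
      sum.distrib scaleR_sum_right algebra_simps)

lemma matrix_diag_map [simp]: "matrix (diag_map h) *v y = diag_map h y"
  by (simp add: linear_diag_map matrix_works)

lemma inner_basis_diag_map: "v \<in> B \<Longrightarrow> v \<bullet> diag_map h y = h v * (v \<bullet> y)"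
  unfolding diag_map_def by (rule inner_basis_sum)

lemma diag_map_diag_map: "diag_map h (diag_map k y) = diag_map (\<lambda>u. h u * k u) y"
  unfolding diag_map_def[of h]
  by (simp add: inner_basis_diag_map diag_map_def[of "\<lambda>u. h u * k u"] mult.assoc cong: sum.cong)

lemma diag_map_cong: "(\<And>u. u \<in> B \<Longrightarrow> h u = k u) \<Longrightarrow> diag_map h y = diag_map k y"
  unfolding diag_map_def by (auto intro!: sum.cong)

lemma diag_map_one: "diag_map (\<lambda>u. 1) y = y"
  unfolding diag_map_def by (simp add: basis_expansion)

lemma matrix_vector_mult_eq_diag_map:
  assumes "\<And>u. u \<in> B \<Longrightarrow> A *v u = lam u *\<^sub>R u"
  shows "A *v y = diag_map lam y"
proof -
  have "A *v y = (\<Sum>u\<in>B. (u \<bullet> y) *\<^sub>R (A *v u))"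
    by (subst (1) basis_expansion[symmetric]) (simp add: matrix_vector_mult_scaleR vec.sum)
  also have "\<dots> = diag_map lam y"
    unfolding diag_map_def using assms by (auto intro!: sum.cong simp: mult.commute)
  finally show ?thesis .
qed

lemma inner_diag_map_commute: "y \<bullet> diag_map h z = diag_map h y \<bullet> z"
  unfolding diag_map_def by (simp add: inner_sum_right inner_sum_left inner_commute mult_ac)

lemma pos_def_mat_diag_map:
  assumes "\<And>u. u \<in> B \<Longrightarrow> h u > 0"
  shows "pos_def_mat (matrix (diag_map h))"
  unfolding pos_def_mat_def sym_mat_def
proof
  have "(transpose (matrix (diag_map h)) *v y) \<bullet> z = (matrix (diag_map h) *v y) \<bullet> z" for y z
    by (simp add: dot_lmul_matrix inner_diag_map_commute)
  then have "transpose (matrix (diag_map h)) *v y = matrix (diag_map h) *v y" for y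
    using vector_eq_rdot by blast
  then show "transpose (matrix (diag_map h)) = matrix (diag_map h)"
    by (simp add: matrix_eq)
  show "\<forall>y. y \<noteq> 0 \<longrightarrow> 0 < y \<bullet> (matrix (diag_map h) *v y)"
  proof (intro allI impI)
    fix y :: "real^'n" assume "y \<noteq> 0"
    then obtain v where "v \<in> B" "v \<bullet> y \<noteq> 0" using basis_coefficient_nonzero by blast
    then have "0 < (\<Sum>u\<in>B. h u * (u \<bullet> y)\<^sup>2)"
      using assms by (intro sum_pos2[OF finite_basis]) (auto simp: less_imp_le)
    then show "0 < y \<bullet> (matrix (diag_map h) *v y)"
      by (simp add: diag_map_def inner_sum_right power2_eq_square inner_commute mult.assoc)
  qed
qed

end

section \<open>The inverse square root of a positive definite matrix\<close>

lemma symmetric_matrix_eigenbasis: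
  fixes A :: "real^'n^'n"
  assumes "transpose A = A"
  obtains B lam where "orthonormal_basis B" and "\<And>u. u \<in> B \<Longrightarrow> A *v u = lam u *\<^sub>R u"
proof -
  obtain B where B: "finite B" "pairwise orthogonal B" "span B = UNIV"
      "\<forall>u\<in>B. norm u = 1 \<and> (\<exists>l. A *v u = l *\<^sub>R u)"
    using symmetric_matrix_orthonormal_eigenbasis[OF assms, of UNIV] by auto
  then have "orthonormal_basis B" by unfold_locales auto
  moreover obtain lam where "\<And>u. u \<in> B \<Longrightarrow> A *v u = lam u *\<^sub>R u" using B(4) by metis
  ultimately show ?thesis using that by blast
qed

lemma pos_def_mat_symmetric: "pos_def_mat S \<Longrightarrow> transpose S = S"
  by (simp add: pos_def_mat_def sym_mat_def)

lemma pos_def_mat_nonneg: "pos_def_mat S \<Longrightarrow> 0 \<le> y \<bullet> (S *v y)"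
  unfolding pos_def_mat_def by (cases "y = 0") (auto intro: less_imp_le)

lemma pos_def_mat_eigenbasis:
  fixes V :: "real^'n^'n"
  assumes "pos_def_mat V"
  obtains B lam where "orthonormal_basis B"
    and "\<And>u. u \<in> B \<Longrightarrow> V *v u = lam u *\<^sub>R u" and "\<And>u. u \<in> B \<Longrightarrow> lam u > 0"
proof -
  obtain B lam where B: "orthonormal_basis B" and lam: "\<And>u. u \<in> B \<Longrightarrow> V *v u = lam u *\<^sub>R u"
    using symmetric_matrix_eigenbasis[OF pos_def_mat_symmetric[OF assms]] by blast
  have "lam u > 0" if "u \<in> B" for u
  proof -
    have "u \<noteq> 0" and "u \<bullet> u = 1"
      using orthonormal_basis.norm_basis[OF B that] by (auto simp: dot_square_norm)
    with assms lam[OF that] show ?thesis unfolding pos_def_mat_def by force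
  qed
  with B lam that show ?thesis by blast
qed

lemma pos_def_mat_inverse_sqrt_exists:
  fixes V :: "real^'n^'n"
  assumes "pos_def_mat V"
  obtains S where "pos_def_mat S" and "V ** (S ** S) = mat 1"
proof -
  obtain B lam where "orthonormal_basis B" and eigen: "\<And>u. u \<in> B \<Longrightarrow> V *v u = lam u *\<^sub>R u"
    and lam_pos: "\<And>u. u \<in> B \<Longrightarrow> lam u > 0"
    using pos_def_mat_eigenbasis[OF assms] by blast
  interpret orthonormal_basis B by fact
  define S where "S = matrix (diag_map (\<lambda>u. 1 / sqrt (lam u)))"
  have "(V ** (S ** S)) *v y = mat 1 *v y" for y
  proof -
    have "(V ** (S ** S)) *v y = diag_map lam (diag_map (\<lambda>u. 1 / sqrt (lam u))
        (diag_map (\<lambda>u. 1 / sqrt (lam u)) y))"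
      by (simp add: S_def matrix_vector_mul_assoc[symmetric] matrix_vector_mult_eq_diag_map[OF eigen])
    also have "\<dots> = diag_map (\<lambda>u. 1) y"
      unfolding diag_map_diag_map
      by (intro diag_map_cong) (use lam_pos in \<open>fastforce simp: real_sqrt_mult_self\<close>)
    finally show ?thesis by (simp add: diag_map_one)
  qed
  then have "V ** (S ** S) = mat 1" by (simp add: matrix_eq)
  moreover have "pos_def_mat S"
    unfolding S_def using lam_pos by (intro pos_def_mat_diag_map) simp
  ultimately show ?thesis using that by blast
qed

lemma pos_def_mat_sqrt_unique:
  fixes S S' :: "real^'n^'n"
  assumes S: "pos_def_mat S" and S': "pos_def_mat S'" and square: "S ** S = S' ** S'"
  shows "S = S'"
proof -
  define D where "D = S - S'"
  have "transpose D = D"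
    using pos_def_mat_symmetric[OF S] pos_def_mat_symmetric[OF S']
    by (simp add: D_def transpose_def vec_eq_iff)
  then obtain B \<mu> where "orthonormal_basis B" and \<mu>: "\<And>u. u \<in> B \<Longrightarrow> D *v u = \<mu> u *\<^sub>R u"
    using symmetric_matrix_eigenbasis by blast
  interpret orthonormal_basis B by fact
  \<comment> \<open>If \<open>D u = \<mu> u\<close> then \<open>0 = u \<bullet> (S\<^sup>2 - S'\<^sup>2) u = \<mu> (u \<bullet> S u + u \<bullet> S' u)\<close>, so \<open>\<mu> = 0\<close>.\<close>
  have "\<mu> u = 0" if "u \<in> B" for u
  proof -
    have "u \<noteq> 0" using norm_basis[OF that] by auto
    have Su: "S *v u = S' *v u + \<mu> u *\<^sub>R u"
      using \<mu>[OF that] by (simp add: D_def matrix_vector_mult_diff_rdistrib algebra_simps)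
    have "(S *v u) \<bullet> (S *v u) = (S' *v u) \<bullet> (S' *v u)"
      using arg_cong[OF square, of "\<lambda>A. u \<bullet> (A *v u)"]
        inner_symmetric_matrix[OF pos_def_mat_symmetric[OF S], of u "S *v u"]
        inner_symmetric_matrix[OF pos_def_mat_symmetric[OF S'], of u "S' *v u"]
      by (simp add: matrix_vector_mul_assoc[symmetric])
    then have "\<mu> u * (u \<bullet> (S *v u) + u \<bullet> (S' *v u)) = 0"
      unfolding Su by (simp add: inner_add_left inner_add_right inner_commute algebra_simps)
    moreover have "0 < u \<bullet> (S *v u) + u \<bullet> (S' *v u)"
      using S S' \<open>u \<noteq> 0\<close> unfolding pos_def_mat_def by (simp add: add_pos_pos)
    ultimately show ?thesis by simp
  qed
  then have "D *v y = 0 *v y" for y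
    using matrix_vector_mult_eq_diag_map[OF \<mu>, of y] diag_map_cong[of \<mu> "\<lambda>_. 0" y]
    by (simp add: diag_map_def)
  then show ?thesis by (simp add: D_def matrix_eq matrix_vector_mult_diff_rdistrib)
qed

lemma inv_sqrt_mat:
  fixes V :: "real^'n^'n"
  assumes "pos_def_mat V"
  shows "pos_def_mat (inv_sqrt_mat V)" and "inv_sqrt_mat V ** inv_sqrt_mat V = matrix_inv V"
    and "V ** matrix_inv V = mat 1"
proof -
  obtain S where S: "pos_def_mat S" "V ** (S ** S) = mat 1"
    using pos_def_mat_inverse_sqrt_exists[OF assms] .
  have inverse: "V ** matrix_inv V = mat 1 \<and> matrix_inv V ** V = mat 1"
    unfolding matrix_inv_def by (rule someI[of _ "S ** S"]) (use S(2) matrix_left_right_inverse in blast)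
  have "matrix_inv V = matrix_inv V ** (V ** (S ** S))" using S(2) by simp
  also have "\<dots> = (matrix_inv V ** V) ** (S ** S)" by (rule matrix_mul_assoc)
  finally have "matrix_inv V = S ** S" using inverse by simp
  then have "\<exists>!S. pos_def_mat S \<and> S ** S = matrix_inv V"
    using S(1) pos_def_mat_sqrt_unique by (intro ex1I[of _ S]) auto
  then have "pos_def_mat (inv_sqrt_mat V) \<and> inv_sqrt_mat V ** inv_sqrt_mat V = matrix_inv V"
    unfolding inv_sqrt_mat_def by (rule theI')
  with inverse show "pos_def_mat (inv_sqrt_mat V)"
    and "inv_sqrt_mat V ** inv_sqrt_mat V = matrix_inv V" and "V ** matrix_inv V = mat 1"
    by auto
qed

section \<open>Quadratic form bounds\<close>

lemma pos_def_mat_Cauchy_Schwarz: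
  fixes V :: "real^'n^'n"
  assumes "pos_def_mat V"
  shows "(z \<bullet> (V *v w))\<^sup>2 \<le> wnorm_sq V z * wnorm_sq V w"
proof (rule quadratic_nonneg_imp_discriminant_le)
  show "0 \<le> wnorm_sq V z + 2 * (z \<bullet> (V *v w)) * t + wnorm_sq V w * t\<^sup>2" for t
    using pos_def_mat_nonneg[OF assms, of "z + t *\<^sub>R w"]
      inner_symmetric_matrix[OF pos_def_mat_symmetric[OF assms], of w z]
    by (simp add: wnorm_sq_def matrix_vector_right_distrib matrix_vector_mult_scaleR
        inner_add_left inner_add_right algebra_simps power2_eq_square inner_commute)
  show "0 \<le> wnorm_sq V w" unfolding wnorm_sq_def by (rule pos_def_mat_nonneg[OF assms])
qed

lemma inverse_quadratic_form_le:
  fixes V T :: "real^'n^'n"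
  assumes above: "loewner_gt V (mat k)" and "k > 0" and inverse: "V ** T = mat 1"
  shows "x \<bullet> (T *v x) \<le> (norm x)\<^sup>2 / k"
proof (cases "T *v x = 0")
  case False
  define z where "z = T *v x"
  have Vz: "V *v z = x" by (simp add: z_def matrix_vector_mul_assoc inverse)
  have "k * (norm z)\<^sup>2 < z \<bullet> x"
    using above False unfolding loewner_gt_def pos_def_mat_def z_def[symmetric]
    by (auto simp: Vz matrix_vector_mult_diff_rdistrib inner_diff_right dot_square_norm)
  also have "\<dots> \<le> norm z * norm x" by (rule Cauchy_Schwarz_ineq2[THEN abs_le_D1])
  finally have "k * norm z \<le> norm x" using False by (simp add: z_def power2_eq_square)
  then have "k * norm z * norm x \<le> norm x * norm x" by (rule mult_right_mono) simp
  then have "norm z * norm x \<le> (norm x)\<^sup>2 / k"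
    using \<open>k > 0\<close> by (simp add: field_simps power2_eq_square)
  with \<open>z \<bullet> x \<le> norm z * norm x\<close> show ?thesis by (simp add: z_def inner_commute)
qed (use \<open>k > 0\<close> in simp)

lemma inner_square_le_inverse_quadratic_form:
  fixes V T :: "real^'n^'n"
  assumes "pos_def_mat V" and inverse: "V ** T = mat 1"
  shows "(x \<bullet> w)\<^sup>2 \<le> (x \<bullet> (T *v x)) * wnorm_sq V w"
proof -
  define z where "z = T *v x"
  have Vz: "V *v z = x" by (simp add: z_def matrix_vector_mul_assoc inverse)
  have "x \<bullet> w = z \<bullet> (V *v w)"
    using inner_symmetric_matrix[OF pos_def_mat_symmetric[OF assms(1)], of z w] Vz by simp
  moreover have "wnorm_sq V z = x \<bullet> (T *v x)"
    by (simp add: wnorm_sq_def Vz) (simp add: z_def inner_commute)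
  ultimately show ?thesis using pos_def_mat_Cauchy_Schwarz[OF assms(1), of z w] by simp
qed

section \<open>Second moments and the clipped probability\<close>

lemma (in prob_space) second_moment_inner_le:
  fixes eta :: "'a \<Rightarrow> 'b::euclidean_space"
  assumes [measurable]: "eta \<in> borel_measurable M"
    and integrable_norm: "integrable M (\<lambda>\<omega>. (norm (eta \<omega>))\<^sup>2)"
  shows "integrable M (\<lambda>\<omega>. (v \<bullet> eta \<omega>)\<^sup>2)"
    and "expectation (\<lambda>\<omega>. (v \<bullet> eta \<omega>)\<^sup>2) \<le> (norm v)\<^sup>2 * expectation (\<lambda>\<omega>. (norm (eta \<omega>))\<^sup>2)"
proof -
  have bound: "(v \<bullet> eta \<omega>)\<^sup>2 \<le> (norm v)\<^sup>2 * (norm (eta \<omega>))\<^sup>2" for \<omega>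
    by (metis Cauchy_Schwarz_ineq2 abs_ge_zero power2_abs power_mono power_mult_distrib)
  have dominating: "integrable M (\<lambda>\<omega>. (norm v)\<^sup>2 * (norm (eta \<omega>))\<^sup>2)"
    using integrable_norm by simp
  then show integrable: "integrable M (\<lambda>\<omega>. (v \<bullet> eta \<omega>)\<^sup>2)"
    by (rule Bochner_Integration.integrable_bound) (use bound in \<open>auto intro!: AE_I2\<close>)
  show "expectation (\<lambda>\<omega>. (v \<bullet> eta \<omega>)\<^sup>2) \<le> (norm v)\<^sup>2 * expectation (\<lambda>\<omega>. (norm (eta \<omega>))\<^sup>2)"
    using integral_mono[OF integrable dominating bound] by simp
qed

lemma (in prob_space) expectation_affine_square:
  fixes g :: "'a \<Rightarrow> real"
  assumes "integrable M g" and "integrable M (\<lambda>\<omega>. (g \<omega>)\<^sup>2)" and "expectation g = 0"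
  shows "integrable M (\<lambda>\<omega>. (a + b * g \<omega>)\<^sup>2)"
    and "expectation (\<lambda>\<omega>. (a + b * g \<omega>)\<^sup>2) = a\<^sup>2 + b\<^sup>2 * expectation (\<lambda>\<omega>. (g \<omega>)\<^sup>2)"
proof -
  have expand: "(\<lambda>\<omega>. (a + b * g \<omega>)\<^sup>2) = (\<lambda>\<omega>. a\<^sup>2 + (2 * a * b) * g \<omega> + b\<^sup>2 * (g \<omega>)\<^sup>2)"
    by (auto simp: power2_eq_square algebra_simps)
  show "integrable M (\<lambda>\<omega>. (a + b * g \<omega>)\<^sup>2)" unfolding expand using assms by simp
  show "expectation (\<lambda>\<omega>. (a + b * g \<omega>)\<^sup>2) = a\<^sup>2 + b\<^sup>2 * expectation (\<lambda>\<omega>. (g \<omega>)\<^sup>2)"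
    unfolding expand using assms by (simp add: prob_space)
qed

lemma (in prob_space) prob_mult_square_le_second_moment:
  fixes Z :: "'a \<Rightarrow> real"
  assumes [measurable]: "Z \<in> borel_measurable M"
    and integrable: "integrable M (\<lambda>\<omega>. (Z \<omega>)\<^sup>2)"
    and subset: "A \<subseteq> {\<omega> \<in> space M. c\<^sup>2 \<le> (Z \<omega>)\<^sup>2}"
  shows "prob A * c\<^sup>2 \<le> expectation (\<lambda>\<omega>. (Z \<omega>)\<^sup>2)"
proof (cases "c = 0")
  case False
  then have "c\<^sup>2 > 0" by simp
  have "prob A \<le> prob {\<omega> \<in> space M. c\<^sup>2 \<le> (Z \<omega>)\<^sup>2}"
    using subset by (rule finite_measure_mono) measurable
  also have "\<dots> \<le> expectation (\<lambda>\<omega>. (Z \<omega>)\<^sup>2) / c\<^sup>2"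
    by (rule integral_Markov_inequality_measure[where A = "space M"])
      (use integrable \<open>c\<^sup>2 > 0\<close> in auto)
  finally show ?thesis using \<open>c\<^sup>2 > 0\<close> by (simp add: field_simps)
qed simp

lemma (in prob_space) prob_sign_change_le_second_moment:
  fixes Z :: "'a \<Rightarrow> real"
  assumes [measurable]: "Z \<in> borel_measurable M" and "integrable M (\<lambda>\<omega>. (Z \<omega>)\<^sup>2)"
  shows "0 \<le> c \<Longrightarrow> prob {\<omega> \<in> space M. c + Z \<omega> < 0} * c\<^sup>2 \<le> expectation (\<lambda>\<omega>. (Z \<omega>)\<^sup>2)"
    and "c \<le> 0 \<Longrightarrow> (1 - prob {\<omega> \<in> space M. c + Z \<omega> < 0}) * c\<^sup>2 \<le> expectation (\<lambda>\<omega>. (Z \<omega>)\<^sup>2)"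
proof -
  assume "0 \<le> c"
  then have "{\<omega> \<in> space M. c + Z \<omega> < 0} \<subseteq> {\<omega> \<in> space M. c\<^sup>2 \<le> (Z \<omega>)\<^sup>2}"
    by (auto simp flip: abs_le_square_iff)
  then show "prob {\<omega> \<in> space M. c + Z \<omega> < 0} * c\<^sup>2 \<le> expectation (\<lambda>\<omega>. (Z \<omega>)\<^sup>2)"
    using assms by (rule prob_mult_square_le_second_moment[rotated 2])
next
  assume "c \<le> 0"
  then have "space M - {\<omega> \<in> space M. c + Z \<omega> < 0} \<subseteq> {\<omega> \<in> space M. c\<^sup>2 \<le> (Z \<omega>)\<^sup>2}"
    by (auto simp flip: abs_le_square_iff)
  moreover have "prob (space M - {\<omega> \<in> space M. c + Z \<omega> < 0}) = 1 - prob {\<omega> \<in> space M. c + Z \<omega> < 0}"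
    by (rule prob_compl) measurable
  ultimately show "(1 - prob {\<omega> \<in> space M. c + Z \<omega> < 0}) * c\<^sup>2 \<le> expectation (\<lambda>\<omega>. (Z \<omega>)\<^sup>2)"
    using prob_mult_square_le_second_moment[OF assms] by metis
qed

lemma mult_less_sqrt_if_square_less:
  fixes c d B e :: real
  assumes "0 < c" and "0 \<le> d" and "d \<le> 1" and "0 < e" and "e * c\<^sup>2 < B"
  shows "d * c < sqrt (B / e)"
proof -
  have "d * c \<le> c" using assms by (simp add: mult_left_le_one_le)
  also have "c < sqrt (B / e)" using assms by (intro real_less_rsqrt) (simp add: field_simps)
  finally show ?thesis .
qed

lemma clipped_gap_bound:
  fixes c P B pmin pmax ps :: real
  defines "p \<equiv> max pmin (min pmax P)"
  assumes "0 < pmin" and "pmin < pmax" and "pmax < 1" and "pmin \<le> ps" and "ps \<le> pmax"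
    and "c > 0 \<Longrightarrow> ps = pmin" and "c < 0 \<Longrightarrow> ps = pmax" and "0 < B"
    and "c > 0 \<Longrightarrow> P * c\<^sup>2 \<le> B" and "c < 0 \<Longrightarrow> (1 - P) * c\<^sup>2 \<le> B"
  shows "0 \<le> (p - ps) * c \<and> (p - ps) * c < sqrt (B / min pmin (1 - pmax))"
proof -
  define e where "e = min pmin (1 - pmax)"
  have "0 < e" using assms by (simp add: e_def)
  then have "0 < sqrt (B / e)" using \<open>0 < B\<close> by simp
  consider "c > 0" | "c < 0" | "c = 0" by linarith
  then have "0 \<le> (p - ps) * c \<and> (p - ps) * c < sqrt (B / e)"
  proof cases
    case 1
    show ?thesis
    proof (cases "P \<le> pmin")
      case False
      with 1 assms have "e * c\<^sup>2 < B"
        by (smt (verit) e_def mult_right_mono mult_strict_right_mono zero_less_power)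
      with 1 assms \<open>0 < e\<close> show ?thesis
        by (auto simp: p_def intro!: mult_less_sqrt_if_square_less)
    qed (use 1 assms \<open>0 < sqrt (B / e)\<close> in auto)
  next
    case 2
    show ?thesis
    proof (cases "pmax \<le> P")
      case False
      with 2 assms have "e * (- c)\<^sup>2 < B"
        by (smt (verit) e_def mult_right_mono mult_strict_right_mono zero_less_power power2_minus)
      with 2 assms \<open>0 < e\<close> have "(ps - p) * (- c) < sqrt (B / e)"
        by (intro mult_less_sqrt_if_square_less) (auto simp: p_def)
      moreover have "(p - ps) * c = (ps - p) * (- c)" by (simp add: algebra_simps)
      moreover have "0 \<le> ps - p" using 2 assms by (simp add: p_def)
      ultimately show ?thesis using 2 by (simp add: mult_nonneg_nonpos)
    qed (use 2 assms \<open>0 < sqrt (B / e)\<close> in auto)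
  qed (use \<open>0 < sqrt (B / e)\<close> in simp)
  then show ?thesis by (simp add: e_def)
qed

lemma norm_inv_sqrt_mat_vector_squared:
  fixes V :: "real^'n^'n"
  assumes "pos_def_mat V"
  shows "(norm (inv_sqrt_mat V *v x))\<^sup>2 = x \<bullet> (matrix_inv V *v x)"
  using inner_symmetric_matrix[OF pos_def_mat_symmetric[OF inv_sqrt_mat(1)[OF assms]],
      of x "inv_sqrt_mat V *v x"]
  by (simp add: dot_square_norm[symmetric] matrix_vector_mul_assoc inv_sqrt_mat(2)[OF assms])

lemma (in prob_space) second_moment_projected_noise_le:
  fixes eta :: "'a \<Rightarrow> real^'n" and V :: "real^'n^'n"
  assumes "pos_def_mat V" and "loewner_gt V (mat k)" and "k > 0" and "norm x \<le> 1"
    and [measurable]: "eta \<in> borel_measurable M" and "integrable M eta"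
    and "expectation eta = 0" and "integrable M (\<lambda>\<omega>. (norm (eta \<omega>))\<^sup>2)"
  shows "integrable M (\<lambda>\<omega>. (x \<bullet> w + \<beta> * ((inv_sqrt_mat V *v x) \<bullet> eta \<omega>))\<^sup>2)"
    and "expectation (\<lambda>\<omega>. (x \<bullet> w + \<beta> * ((inv_sqrt_mat V *v x) \<bullet> eta \<omega>))\<^sup>2)
      \<le> (wnorm_sq V w + \<beta>\<^sup>2 * expectation (\<lambda>\<omega>. (norm (eta \<omega>))\<^sup>2)) / k"
proof -
  define v where "v = inv_sqrt_mat V *v x"
  define T where "T = matrix_inv V"
  have inverse: "V ** T = mat 1" using inv_sqrt_mat(3)[OF assms(1)] by (simp add: T_def)
  have norm_v: "(norm v)\<^sup>2 = x \<bullet> (T *v x)"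
    unfolding v_def T_def by (rule norm_inv_sqrt_mat_vector_squared[OF assms(1)])
  have "x \<bullet> (T *v x) \<le> 1 / k"
    using inverse_quadratic_form_le[OF assms(2,3) inverse, of x] assms(3,4)
      divide_right_mono[of "(norm x)\<^sup>2" 1 k] by (simp add: power_le_one)
  have g: "integrable M (\<lambda>\<omega>. v \<bullet> eta \<omega>)" "expectation (\<lambda>\<omega>. v \<bullet> eta \<omega>) = 0"
    using assms(6,7) by simp_all
  note second = second_moment_inner_le[OF assms(5,8), of v]
  show "integrable M (\<lambda>\<omega>. (x \<bullet> w + \<beta> * ((inv_sqrt_mat V *v x) \<bullet> eta \<omega>))\<^sup>2)"
    unfolding v_def[symmetric] by (rule expectation_affine_square(1)[OF g(1) second(1) g(2)])
  have "expectation (\<lambda>\<omega>. (x \<bullet> w + \<beta> * (v \<bullet> eta \<omega>))\<^sup>2)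
      = (x \<bullet> w)\<^sup>2 + \<beta>\<^sup>2 * expectation (\<lambda>\<omega>. (v \<bullet> eta \<omega>)\<^sup>2)"
    by (rule expectation_affine_square(2)[OF g(1) second(1) g(2)])
  also have "\<dots> \<le> x \<bullet> (T *v x) * wnorm_sq V w
      + \<beta>\<^sup>2 * ((norm v)\<^sup>2 * expectation (\<lambda>\<omega>. (norm (eta \<omega>))\<^sup>2))"
    by (intro add_mono inner_square_le_inverse_quadratic_form[OF assms(1) inverse]
        mult_left_mono second(2)) simp
  also have "\<dots> = x \<bullet> (T *v x) * (wnorm_sq V w + \<beta>\<^sup>2 * expectation (\<lambda>\<omega>. (norm (eta \<omega>))\<^sup>2))"
    by (simp add: norm_v algebra_simps)
  also have "\<dots> \<le> (wnorm_sq V w + \<beta>\<^sup>2 * expectation (\<lambda>\<omega>. (norm (eta \<omega>))\<^sup>2)) / k"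
    using mult_right_mono[OF \<open>x \<bullet> (T *v x) \<le> 1 / k\<close>,
        of "wnorm_sq V w + \<beta>\<^sup>2 * expectation (\<lambda>\<omega>. (norm (eta \<omega>))\<^sup>2)"]
      pos_def_mat_nonneg[OF assms(1), of w]
    by (simp add: wnorm_sq_def)
  finally show "expectation (\<lambda>\<omega>. (x \<bullet> w + \<beta> * ((inv_sqrt_mat V *v x) \<bullet> eta \<omega>))\<^sup>2)
      \<le> (wnorm_sq V w + \<beta>\<^sup>2 * expectation (\<lambda>\<omega>. (norm (eta \<omega>))\<^sup>2)) / k"
    unfolding v_def .
qed

lemma (in prob_space) clipped_prob_gap_bound:
  fixes Z :: "'a \<Rightarrow> real" and c B pmin pmax ps :: real
  assumes "Z \<in> borel_measurable M" and "integrable M (\<lambda>\<omega>. (Z \<omega>)\<^sup>2)"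
    and "expectation (\<lambda>\<omega>. (Z \<omega>)\<^sup>2) \<le> B" and "0 < B"
    and "0 < pmin" and "pmin < pmax" and "pmax < 1" and "pmin \<le> ps" and "ps \<le> pmax"
    and "c > 0 \<Longrightarrow> ps = pmin" and "c < 0 \<Longrightarrow> ps = pmax"
  shows "let p = max pmin (min pmax (prob {\<omega> \<in> space M. c + Z \<omega> < 0}))
    in 0 \<le> (p - ps) * c \<and> (p - ps) * c < sqrt (B / min pmin (1 - pmax))"
  unfolding Let_def
proof (rule clipped_gap_bound)
  note sign_change = prob_sign_change_le_second_moment[OF assms(1,2), of c]
  show "c > 0 \<Longrightarrow> prob {\<omega> \<in> space M. c + Z \<omega> < 0} * c\<^sup>2 \<le> B"
    using sign_change(1) assms(3) by linarith
  show "c < 0 \<Longrightarrow> (1 - prob {\<omega> \<in> space M. c + Z \<omega> < 0}) * c\<^sup>2 \<le> B"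
    using sign_change(2) assms(3) by linarith
qed (use assms in auto)

theorem lemmaE14:
  fixes M :: "'a measure"
    and eta :: "'a \<Rightarrow> real^'n"
    and x \<theta>star \<theta>check :: "real^'n"
    and V :: "real^'n^'n"
    and \<alpha> \<beta> \<pi>min \<pi>max \<pi>star :: real
    and m :: nat
  assumes "prob_space M"
    and "norm x \<le> 1"
    and "pos_def_mat V"
    and "\<alpha> > 0" and "m \<ge> 1"
    and "loewner_gt V (mat (\<alpha> * real m))"
    and "\<beta> > 0"
    and "eta \<in> borel_measurable M"
    and "integrable M eta"
    and "integral\<^sup>L M eta = 0"
    and "integrable M (\<lambda>\<omega>. (norm (eta \<omega>))\<^sup>2)"
    and "integral\<^sup>L M (\<lambda>\<omega>. (norm (eta \<omega>))\<^sup>2) > 0"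
    and "0 < \<pi>min" and "\<pi>min < \<pi>max" and "\<pi>max < 1"
    and "x \<bullet> \<theta>star > 0 \<Longrightarrow> \<pi>star = \<pi>min"
    and "x \<bullet> \<theta>star < 0 \<Longrightarrow> \<pi>star = \<pi>max"
    and "\<pi>min \<le> \<pi>star" and "\<pi>star \<le> \<pi>max"
  shows "let \<pi> = max \<pi>min (min \<pi>max
               (measure M {\<omega> \<in> space M.
                  x \<bullet> (\<theta>check + \<beta> *\<^sub>R (inv_sqrt_mat V *v eta \<omega>)) < 0}))
         in (\<pi> - \<pi>star) * (x \<bullet> \<theta>star) \<ge> 0 \<and>
            (\<pi> - \<pi>star) * (x \<bullet> \<theta>star) <
              sqrt ((wnorm_sq V (\<theta>check - \<theta>star)
                     + \<beta>\<^sup>2 * integral\<^sup>L M (\<lambda>\<omega>. (norm (eta \<omega>))\<^sup>2))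
                    / (min \<pi>min (1 - \<pi>max) * \<alpha> * real m))"
proof -
  interpret prob_space M by fact
  note [measurable] = assms(8)
  define k where "k = \<alpha> * real m"
  define c where "c = x \<bullet> \<theta>star"
  define S where "S = inv_sqrt_mat V"
  define Z where "Z \<omega> = x \<bullet> (\<theta>check - \<theta>star) + \<beta> * ((S *v x) \<bullet> eta \<omega>)" for \<omega>
  define E where "E = wnorm_sq V (\<theta>check - \<theta>star) + \<beta>\<^sup>2 * expectation (\<lambda>\<omega>. (norm (eta \<omega>))\<^sup>2)"
  have "k > 0" using assms(4,5) by (simp add: k_def)
  note moments = second_moment_projected_noise_le[OF assms(3) assms(6)[folded k_def] \<open>k > 0\<close>
      assms(2) assms(8-11), of "\<theta>check - \<theta>star" \<beta>, folded S_def, folded Z_def E_def]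
  have "Z \<in> borel_measurable M" unfolding Z_def by measurable
  moreover have "0 < E / k"
    using assms(7,12) pos_def_mat_nonneg[OF assms(3)] \<open>k > 0\<close>
    by (simp add: E_def wnorm_sq_def add_nonneg_pos)
  ultimately have gap: "let p = max \<pi>min (min \<pi>max (prob {\<omega> \<in> space M. c + Z \<omega> < 0}))
      in 0 \<le> (p - \<pi>star) * c \<and> (p - \<pi>star) * c < sqrt (E / k / min \<pi>min (1 - \<pi>max))"
    using moments assms(13-15,18,19) assms(16,17)[folded c_def] by (intro clipped_prob_gap_bound)
  have event: "x \<bullet> (\<theta>check + \<beta> *\<^sub>R (S *v eta \<omega>)) = c + Z \<omega>" for \<omega>
    using inner_symmetric_matrix[OF pos_def_mat_symmetric[OF inv_sqrt_mat(1)[OF assms(3)]]]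
    by (simp add: c_def Z_def S_def inner_add_right inner_diff_right)
  have sqrt_arg: "E / (min \<pi>min (1 - \<pi>max) * \<alpha> * real m) = E / k / min \<pi>min (1 - \<pi>max)"
    by (simp add: k_def mult_ac)
  show ?thesis
    unfolding S_def[symmetric] event c_def[symmetric] E_def[symmetric] sqrt_arg
    using gap by (simp only: Let_def)
qed

end
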